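(* Let $H$ be a simple undirected graph on vertex set $[n]$, let $\{u_i\}_{i=1}^n$ and $\{w_j\}_{j=1}^n$ be two orthonormal families in $\mathbb{C}^d$, let $\{e_i\}$ be the standard basis of $\mathbb{C}^n$, and let $K=\sum_{i=1}^n |e_i\rangle\langle u_i\otimes w_i|$. If $\rho\in\mathcal{F}_H$ is separable, then $Z_K(\rho)=K\rho K^*\in\operatorname{R}_1[\mathcal{M}_n^+(H)]$.
   Context: A bipartite PSD $\rho$ on $\mathbb{C}^d\otimes\mathbb{C}^d$ is separable if $\rho=\sum_k|v_k\rangle\langle v_k|\otimes|x_k\rangle\langle x_k|$ for finitely many vectors. For an $n\times n$ matrix $X$, $G(X)$ is the undirected graph on $[n]$ with edge set $\{\{i,j\}: i\ne j,\ X_{ij}X_{ji}\neq 0\}$. $\mathcal{M}_n^+(H)$ is the cone of $n\times n$ PSD matrices $X$ with $G(X)\subseteq H$. $D(\rho)_{ij}=\langle u_i\otimes w_j|\rho|u_i\otimes w_j\rangle$ and $\mathcal{F}_H=\{\rho\in(\mathcal{M}_d\otimes\mathcal{M}_d)^+: G(D(\rho))\subseteq H\}$. For a cone $\mathcal{C}\subseteq\mathcal{M}_n^+$, $\operatorname{R}_1[\mathcal{C}]$ is the convex cone generated by the rank-1 matrices belonging to $\mathcal{C}$. *)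

theory Defs
  imports Complex_Main "Jordan_Normal_Form.DL_Rank"
begin

(* Complex matrices/vectors: Jordan_Normal_Form types 'complex mat', 'complex vec'.
   Indices are 0-based: [n] is rendered as {0..<n}. *)

definition adj :: "complex mat \<Rightarrow> complex mat" where
  "adj A = mat (dim_col A) (dim_row A) (\<lambda>(i,j). cnj (A $$ (j,i)))"

definition ketbra :: "complex vec \<Rightarrow> complex vec \<Rightarrow> complex mat" where
  "ketbra v w = mat (dim_vec v) (dim_vec w) (\<lambda>(i,j). v $ i * cnj (w $ j))"

definition expval :: "complex vec \<Rightarrow> complex mat \<Rightarrow> complex" where
  "expval v A = scalar_prod (conjugate v) (mult_mat_vec A v)"

(* tensor (Kronecker) products; C^p (x) C^q identified with C^(p*q), index (a,b) |-> a*q+b *)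
definition kron_vec :: "complex vec \<Rightarrow> complex vec \<Rightarrow> complex vec" where
  "kron_vec v w = vec (dim_vec v * dim_vec w)
     (\<lambda>i. v $ (i div dim_vec w) * w $ (i mod dim_vec w))"

definition kron_mat :: "complex mat \<Rightarrow> complex mat \<Rightarrow> complex mat" where
  "kron_mat A B = mat (dim_row A * dim_row B) (dim_col A * dim_col B)
     (\<lambda>(i,j). A $$ (i div dim_row B, j div dim_col B) * B $$ (i mod dim_row B, j mod dim_col B))"

definition psd :: "nat \<Rightarrow> complex mat \<Rightarrow> bool" where
  "psd n A \<longleftrightarrow> A \<in> carrier_mat n n \<and> adj A = A \<and>
     (\<forall>v \<in> carrier_vec n. expval v A \<in> \<real> \<and> Re (expval v A) \<ge> 0)"

definition graph_of :: "nat \<Rightarrow> complex mat \<Rightarrow> nat set set" where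
  "graph_of n X = {{i,j} | i j. i < n \<and> j < n \<and> i \<noteq> j \<and> X $$ (i,j) * X $$ (j,i) \<noteq> 0}"

definition simple_graph :: "nat \<Rightarrow> nat set set \<Rightarrow> bool" where
  "simple_graph n H \<longleftrightarrow> (\<forall>e \<in> H. \<exists>i j. e = {i,j} \<and> i \<noteq> j \<and> i < n \<and> j < n)"

definition psd_graph_cone :: "nat \<Rightarrow> nat set set \<Rightarrow> complex mat set" where
  "psd_graph_cone n H = {X. psd n X \<and> graph_of n X \<subseteq> H}"

(* R_1[C] for a cone C of n x n matrices: convex cone generated by the rank-1 members of C
   (finite nonnegative combinations; the empty combination gives 0) *)
definition R1 :: "nat \<Rightarrow> complex mat set \<Rightarrow> complex mat set" where
  "R1 n C = {Y. \<exists>(m::nat) (c :: nat \<Rightarrow> real) Xs.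
       (\<forall>k<m. c k \<ge> 0 \<and> Xs k \<in> C \<and> Xs k \<in> carrier_mat n n \<and> vec_space.rank n (Xs k) = 1) \<and>
       Y = mat n n (\<lambda>ij. \<Sum>k<m. complex_of_real (c k) * Xs k $$ ij)}"

definition separable_state :: "nat \<Rightarrow> complex mat \<Rightarrow> bool" where
  "separable_state d \<rho> \<longleftrightarrow> (\<exists>(m::nat) v x.
       (\<forall>k<m. v k \<in> carrier_vec d \<and> x k \<in> carrier_vec d) \<and>
       \<rho> = mat (d*d) (d*d)
          (\<lambda>ij. \<Sum>k<m. kron_mat (ketbra (v k) (v k)) (ketbra (x k) (x k)) $$ ij))"

definition orthonormal_family :: "nat \<Rightarrow> nat \<Rightarrow> (nat \<Rightarrow> complex vec) \<Rightarrow> bool" where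
  "orthonormal_family d n u \<longleftrightarrow> (\<forall>i<n. u i \<in> carrier_vec d) \<and>
     (\<forall>i<n. \<forall>j<n. cscalar_prod (u j) (u i) = (if i = j then 1 else 0))"

definition Dmat :: "nat \<Rightarrow> (nat \<Rightarrow> complex vec) \<Rightarrow> (nat \<Rightarrow> complex vec) \<Rightarrow> complex mat \<Rightarrow> complex mat" where
  "Dmat n u w \<rho> = mat n n (\<lambda>(i,j). expval (kron_vec (u i) (w j)) \<rho>)"

definition FH :: "nat \<Rightarrow> nat \<Rightarrow> (nat \<Rightarrow> complex vec) \<Rightarrow> (nat \<Rightarrow> complex vec) \<Rightarrow> nat set set \<Rightarrow> complex mat set" where
  "FH d n u w H = {\<rho>. psd (d*d) \<rho> \<and> graph_of n (Dmat n u w \<rho>) \<subseteq> H}"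

definition std_basis :: "nat \<Rightarrow> nat \<Rightarrow> complex vec" where
  "std_basis n i = vec n (\<lambda>k. if k = i then 1 else 0)"

definition Kmat :: "nat \<Rightarrow> nat \<Rightarrow> (nat \<Rightarrow> complex vec) \<Rightarrow> (nat \<Rightarrow> complex vec) \<Rightarrow> complex mat" where
  "Kmat d n u w = mat n (d*d) (\<lambda>ij. \<Sum>i<n. ketbra (std_basis n i) (kron_vec (u i) (w i)) $$ ij)"

end

theory Submission
  imports Defs
begin

(* A separable rho is a sum of projections |z_k><z_k| onto product vectors z_k = v_k (x) x_k, so
   K rho K^* = sum_k |a_k><a_k| with a_k = K z_k, whose i-th entry is <u_i|v_k><w_i|x_k>.
   Each nonzero term is a rank-one PSD matrix whose graph lies in H: if the entries i and j of a_k
   are both nonzero, then <u_i|v_k> and <w_j|x_k> are nonzero, so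
   D(rho)_ij = sum_k |<u_i|v_k>|^2 |<w_j|x_k>|^2 > 0; likewise D(rho)_ji > 0, hence {i,j} is an edge
   of G(D(rho)), which is contained in H.
   In the code, v \<bullet>c u denotes <u|v>. *)

lemma sum_lessThan_mult_div_mod:
  fixes f :: "nat \<Rightarrow> nat \<Rightarrow> 'a::comm_monoid_add"
  shows "(\<Sum>p<a*b. f (p div b) (p mod b)) = (\<Sum>i<a. \<Sum>j<b. f i j)"
proof -
  have bij: "bij_betw (\<lambda>(i,j). i*b + j) ({..<a} \<times> {..<b}) {..<a*b}"
  proof (rule bij_betwI[where g="\<lambda>p. (p div b, p mod b)"])
    show "(\<lambda>(i,j). i*b + j) \<in> {..<a} \<times> {..<b} \<rightarrow> {..<a*b}"
    proof (clarsimp)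
      fix i j assume "i < a" "j < b"
      then have "i*b + j < (i+1)*b" by simp
      also have "\<dots> \<le> a*b" using \<open>i < a\<close> by (intro mult_right_mono) auto
      finally show "i*b + j < a*b" .
    qed
    show "(\<lambda>p. (p div b, p mod b)) \<in> {..<a*b} \<rightarrow> {..<a} \<times> {..<b}"
      by (auto simp: less_mult_imp_div_less intro!: mod_less_divisor gr0I)
  qed auto
  have "(\<Sum>i<a. \<Sum>j<b. f i j) = (\<Sum>(i,j)\<in>{..<a} \<times> {..<b}. f ((i*b + j) div b) ((i*b + j) mod b))"
    by (auto simp: sum.cartesian_product intro!: sum.cong)
  also have "\<dots> = (\<Sum>p<a*b. f (p div b) (p mod b))"
    using sum.reindex_bij_betw[OF bij, of "\<lambda>p. f (p div b) (p mod b)"] by (simp add: case_prod_unfold)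
  finally show ?thesis by simp
qed

lemma dim_kron_vec [simp]: "dim_vec (kron_vec v w) = dim_vec v * dim_vec w"
  by (simp add: kron_vec_def)

lemma carrier_kron_vec: "v \<in> carrier_vec n \<Longrightarrow> w \<in> carrier_vec m \<Longrightarrow> kron_vec v w \<in> carrier_vec (n * m)"
  by (rule carrier_vecI) auto

lemma kron_vec_cscalar_prod:
  assumes "dim_vec a = dim_vec c" "dim_vec b = dim_vec e"
  shows "kron_vec a b \<bullet>c kron_vec c e = (a \<bullet>c c) * (b \<bullet>c e)"
proof -
  have "kron_vec a b \<bullet>c kron_vec c e = (\<Sum>p<dim_vec c * dim_vec e.
      a $ (p div dim_vec e) * b $ (p mod dim_vec e) * cnj (c $ (p div dim_vec e) * e $ (p mod dim_vec e)))"
    using assms by (auto simp: scalar_prod_def kron_vec_def atLeast0LessThan intro!: sum.cong)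
  also have "\<dots> = (\<Sum>i<dim_vec c. \<Sum>j<dim_vec e. a $ i * b $ j * cnj (c $ i * e $ j))"
    by (fact sum_lessThan_mult_div_mod[of "\<lambda>i j. a $ i * b $ j * cnj (c $ i * e $ j)"])
  also have "\<dots> = (a \<bullet>c c) * (b \<bullet>c e)"
    using assms by (simp add: scalar_prod_def atLeast0LessThan sum_product ac_simps)
  finally show ?thesis .
qed

lemma kron_mat_ketbra:
  "kron_mat (ketbra v v') (ketbra x x') = ketbra (kron_vec v x) (kron_vec v' x')"
proof (rule eq_matI)
  fix i j assume "i < dim_row (ketbra (kron_vec v x) (kron_vec v' x'))"
    "j < dim_col (ketbra (kron_vec v x) (kron_vec v' x'))"
  then have ij: "i < dim_vec v * dim_vec x" "j < dim_vec v' * dim_vec x'"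
    by (auto simp: ketbra_def kron_vec_def)
  then have "i div dim_vec x < dim_vec v" "i mod dim_vec x < dim_vec x"
    "j div dim_vec x' < dim_vec v'" "j mod dim_vec x' < dim_vec x'"
    by (auto simp: less_mult_imp_div_less intro!: mod_less_divisor gr0I)
  with ij show "kron_mat (ketbra v v') (ketbra x x') $$ (i, j) =
      ketbra (kron_vec v x) (kron_vec v' x') $$ (i, j)"
    by (simp add: kron_mat_def ketbra_def kron_vec_def)
qed (auto simp: kron_mat_def ketbra_def kron_vec_def)

lemma carrier_ketbra: "v \<in> carrier_vec n \<Longrightarrow> w \<in> carrier_vec m \<Longrightarrow> ketbra v w \<in> carrier_mat n m"
  by (simp add: ketbra_def)

lemma ketbra_zero_vec: "ketbra (0\<^sub>v n) w = 0\<^sub>m n (dim_vec w)"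
  by (rule eq_matI) (auto simp: ketbra_def)

lemma mult_ketbra:
  assumes "K \<in> carrier_mat n (dim_vec v)"
  shows "K * ketbra v w = ketbra (K *\<^sub>v v) w"
  using assms by (intro eq_matI) (auto simp: ketbra_def scalar_prod_def sum_distrib_left ac_simps)

lemma ketbra_mult_adj:
  assumes "K \<in> carrier_mat n (dim_vec w)"
  shows "ketbra v w * adj K = ketbra v (K *\<^sub>v w)"
  using assms by (intro eq_matI) (auto simp: ketbra_def adj_def scalar_prod_def sum_distrib_left ac_simps)

lemma ketbra_mult_vec:
  assumes "y \<in> carrier_vec (dim_vec w)"
  shows "ketbra v w *\<^sub>v y = (y \<bullet>c w) \<cdot>\<^sub>v v"
  using assms by (intro eq_vecI) (auto simp: ketbra_def scalar_prod_def sum_distrib_left ac_simps)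

lemma expval_ketbra:
  assumes "y \<in> carrier_vec n" "z \<in> carrier_vec n"
  shows "expval y (ketbra z z) = of_real ((cmod (z \<bullet>c y))\<^sup>2)"
proof -
  have "expval y (ketbra z z) = (y \<bullet>c z) * (conjugate y \<bullet> z)"
    using assms by (simp add: expval_def ketbra_mult_vec)
  also have "\<dots> = cnj (z \<bullet>c y) * (z \<bullet>c y)"
    using assms conjugate_conjugate_sprod[of y n z] conjugate_vec_sprod_comm[of z n y]
    by simp
  finally show ?thesis
    by (simp add: complex_norm_square mult.commute del: of_real_power)
qed

lemma psd_ketbra:
  assumes "v \<in> carrier_vec n"
  shows "psd n (ketbra v v)"
proof -
  have "adj (ketbra v v) = ketbra v v"
    by (rule eq_matI) (auto simp: adj_def ketbra_def)
  moreover have "expval y (ketbra v v) \<in> \<real> \<and> 0 \<le> Re (expval y (ketbra v v))"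
    if "y \<in> carrier_vec n" for y
    using that assms by (simp add: expval_ketbra)
  ultimately show ?thesis
    using assms carrier_ketbra[of v n v n] by (simp add: psd_def)
qed

lemma (in vec_space) lin_indpt_singleton:
  assumes "v \<in> carrier_vec n" "v \<noteq> 0\<^sub>v n"
  shows "lin_indpt {v}"
  using assms lindep_span[of "{v}"] span_empty by auto

lemma rank_ketbra:
  assumes v: "v \<in> carrier_vec n" "v \<noteq> 0\<^sub>v n"
  shows "vec_space.rank n (ketbra v v) = 1"
proof -
  have carrier: "ketbra v v \<in> carrier_mat n n"
    using v by (simp add: ketbra_def)
  have le: "vec_space.rank n (ketbra v v) \<le> 1"
    using v
    by (intro vec_space.rank_le_1_product_entries[OF carrier, where f="\<lambda>i. v $ i" and g="\<lambda>j. cnj (v $ j)"])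
      (auto simp: ketbra_def)
  obtain j where j: "j < n" "v $ j \<noteq> 0"
    using v by (metis carrier_vecD eq_vecI index_zero_vec)
  define c where "c = col (ketbra v v) j"
  have "c \<in> carrier_vec n" "c \<noteq> 0\<^sub>v n"
    using v j by (auto simp: c_def ketbra_def dest!: arg_cong[where f="\<lambda>x. x $ j"])
  moreover have "c \<in> set (cols (ketbra v v))"
    using v j by (auto simp: c_def cols_def ketbra_def)
  ultimately have "1 \<le> vec_space.rank n (ketbra v v)"
    using vec_space.rank_ge_card_indpt[OF carrier, of "{c}"] vec_space.lin_indpt_singleton by auto
  with le show ?thesis by simp
qed

lemma graph_of_ketbra:
  assumes "v \<in> carrier_vec n"
  shows "graph_of n (ketbra v v) = {{i, j} |i j. i < n \<and> j < n \<and> i \<noteq> j \<and> v $ i \<noteq> 0 \<and> v $ j \<noteq> 0}"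
proof -
  have "(i < n \<and> j < n \<and> i \<noteq> j \<and> ketbra v v $$ (i, j) * ketbra v v $$ (j, i) \<noteq> 0) \<longleftrightarrow>
      (i < n \<and> j < n \<and> i \<noteq> j \<and> v $ i \<noteq> 0 \<and> v $ j \<noteq> 0)" for i j
    using assms by (auto simp: ketbra_def)
  then show ?thesis
    unfolding graph_of_def by simp
qed

lemma ketbra_in_psd_graph_cone:
  assumes "v \<in> carrier_vec n"
    and "\<And>i j. i < n \<Longrightarrow> j < n \<Longrightarrow> i \<noteq> j \<Longrightarrow> v $ i \<noteq> 0 \<Longrightarrow> v $ j \<noteq> 0 \<Longrightarrow> {i, j} \<in> H"
  shows "ketbra v v \<in> psd_graph_cone n H"
  using assms by (auto simp: psd_graph_cone_def psd_ketbra graph_of_ketbra)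

definition ketbra_sum :: "nat \<Rightarrow> nat \<Rightarrow> (nat \<Rightarrow> complex vec) \<Rightarrow> complex mat" where
  "ketbra_sum N m z = mat N N (\<lambda>ij. \<Sum>k<m. ketbra (z k) (z k) $$ ij)"

lemma carrier_ketbra_sum: "ketbra_sum N m z \<in> carrier_mat N N"
  by (simp add: ketbra_sum_def)

lemma ketbra_sum_0: "ketbra_sum N 0 z = 0\<^sub>m N N"
  by (rule eq_matI) (auto simp: ketbra_sum_def)

lemma ketbra_sum_Suc:
  assumes "z m \<in> carrier_vec N"
  shows "ketbra_sum N (Suc m) z = ketbra_sum N m z + ketbra (z m) (z m)"
  using assms by (intro eq_matI) (auto simp: ketbra_sum_def ketbra_def)

lemma ketbra_sum_congruence:
  assumes K: "K \<in> carrier_mat n N" and z: "\<forall>k<m. z k \<in> carrier_vec N"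
  shows "K * ketbra_sum N m z * adj K = ketbra_sum n m (\<lambda>k. K *\<^sub>v z k)"
  using z
proof (induction m)
  case 0
  have "adj K \<in> carrier_mat N n"
    using K by (simp add: adj_def)
  with K show ?case
    by (simp add: ketbra_sum_0)
next
  case (Suc m)
  have zm: "z m \<in> carrier_vec N" and adjK: "adj K \<in> carrier_mat N n"
    using Suc.prems K by (auto simp: adj_def)
  have S: "ketbra_sum N m z \<in> carrier_mat N N" and T: "ketbra (z m) (z m) \<in> carrier_mat N N"
    using zm carrier_ketbra_sum[of N m z] carrier_ketbra[of "z m" N "z m" N] by auto
  have "K * ketbra_sum N (Suc m) z * adj K = (K * ketbra_sum N m z + K * ketbra (z m) (z m)) * adj K"
    using mult_add_distrib_mat[OF K S T] zm by (simp add: ketbra_sum_Suc)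
  also have "\<dots> = K * ketbra_sum N m z * adj K + K * ketbra (z m) (z m) * adj K"
    using K S T adjK by (intro add_mult_distrib_mat) auto
  also have "K * ketbra (z m) (z m) * adj K = ketbra (K *\<^sub>v z m) (K *\<^sub>v z m)"
    using K zm by (simp add: mult_ketbra ketbra_mult_adj)
  finally show ?case
    using Suc K zm by (simp add: ketbra_sum_Suc)
qed

lemma expval_add:
  assumes "A \<in> carrier_mat N N" "B \<in> carrier_mat N N" "y \<in> carrier_vec N"
  shows "expval y (A + B) = expval y A + expval y B"
  using assms by (simp add: expval_def add_mult_distrib_mat_vec scalar_prod_add_distrib[of _ N])

lemma expval_ketbra_sum:
  assumes y: "y \<in> carrier_vec N" and z: "\<forall>k<m. z k \<in> carrier_vec N"
  shows "expval y (ketbra_sum N m z) = of_real (\<Sum>k<m. (cmod (z k \<bullet>c y))\<^sup>2)"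
  using z
proof (induction m)
  case 0
  have "0\<^sub>m N N *\<^sub>v y = 0\<^sub>v N"
    using y by (intro eq_vecI) auto
  with y show ?case
    by (simp add: ketbra_sum_0 expval_def)
next
  case (Suc m)
  then have "z m \<in> carrier_vec N"
    by simp
  with Suc y show ?case
    using carrier_ketbra_sum[of N m z] carrier_ketbra[of "z m" N "z m" N]
    by (simp add: ketbra_sum_Suc expval_add expval_ketbra)
qed

lemma R1_zero: "0\<^sub>m n n \<in> R1 n C"
  unfolding R1_def by (rule CollectI, rule exI[of _ 0]) (auto intro!: eq_matI)

lemma R1_add_rank_one:
  assumes X: "X \<in> R1 n C" and Y: "Y \<in> C" "Y \<in> carrier_mat n n" "vec_space.rank n Y = 1"
  shows "X + Y \<in> R1 n C"
proof -
  obtain m :: nat and c Xs where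
    gen: "\<forall>k<m. c k \<ge> 0 \<and> Xs k \<in> C \<and> Xs k \<in> carrier_mat n n \<and> vec_space.rank n (Xs k) = 1" and
    X_eq: "X = mat n n (\<lambda>ij. \<Sum>k<m. complex_of_real (c k) * Xs k $$ ij)"
    using X unfolding R1_def by blast
  let ?c = "c(m := 1)" and ?Xs = "Xs(m := Y)"
  have "\<forall>k<Suc m. ?c k \<ge> 0 \<and> ?Xs k \<in> C \<and> ?Xs k \<in> carrier_mat n n \<and> vec_space.rank n (?Xs k) = 1"
    using gen Y by (auto simp: less_Suc_eq)
  moreover have "X + Y = mat n n (\<lambda>ij. \<Sum>k<Suc m. complex_of_real (?c k) * ?Xs k $$ ij)"
    using Y by (intro eq_matI) (auto simp: X_eq intro!: sum.cong)
  ultimately show ?thesis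
    unfolding R1_def by blast
qed

lemma ketbra_sum_in_R1:
  assumes "\<forall>k<m. a k \<in> carrier_vec n \<and> (a k \<noteq> 0\<^sub>v n \<longrightarrow> ketbra (a k) (a k) \<in> C)"
  shows "ketbra_sum n m a \<in> R1 n C"
  using assms
proof (induction m)
  case 0
  show ?case
    by (simp add: ketbra_sum_0 R1_zero)
next
  case (Suc m)
  then have am: "a m \<in> carrier_vec n" and IH: "ketbra_sum n m a \<in> R1 n C"
    by simp_all
  show ?case
  proof (cases "a m = 0\<^sub>v n")
    case True
    then show ?thesis
      using IH carrier_ketbra_sum[of n m a] by (simp add: ketbra_sum_Suc ketbra_zero_vec)
  next
    case False
    with Suc.prems have "ketbra (a m) (a m) \<in> C"
      by simp
    with am False IH show ?thesis
      using carrier_ketbra[of "a m" n "a m" n] by (simp add: ketbra_sum_Suc R1_add_rank_one rank_ketbra)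
  qed
qed

lemma separable_state_ketbra_sum:
  assumes "separable_state d \<rho>"
  obtains m v x where "\<And>k. k < m \<Longrightarrow> v k \<in> carrier_vec d" "\<And>k. k < m \<Longrightarrow> x k \<in> carrier_vec d"
    and "\<rho> = ketbra_sum (d * d) m (\<lambda>k. kron_vec (v k) (x k))"
  using assms unfolding separable_state_def ketbra_sum_def by (auto simp: kron_mat_ketbra)

lemma carrier_Kmat: "Kmat d n u w \<in> carrier_mat n (d * d)"
  by (simp add: Kmat_def)

lemma index_Kmat:
  assumes u: "\<And>i. i < n \<Longrightarrow> u i \<in> carrier_vec d" and w: "\<And>i. i < n \<Longrightarrow> w i \<in> carrier_vec d"
    and i: "i < n" and p: "p < d * d"
  shows "Kmat d n u w $$ (i, p) = cnj (kron_vec (u i) (w i) $ p)"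
proof -
  have "ketbra (std_basis n i') (kron_vec (u i') (w i')) $$ (i, p) =
      (if i' = i then cnj (kron_vec (u i) (w i) $ p) else 0)" if "i' < n" for i'
    using i p u[OF that] w[OF that] by (simp add: ketbra_def std_basis_def)
  then show ?thesis
    using i p by (simp add: Kmat_def)
qed

lemma Kmat_mult_vec:
  assumes u: "\<And>i. i < n \<Longrightarrow> u i \<in> carrier_vec d" and w: "\<And>i. i < n \<Longrightarrow> w i \<in> carrier_vec d"
    and y: "y \<in> carrier_vec (d * d)" and i: "i < n"
  shows "(Kmat d n u w *\<^sub>v y) $ i = y \<bullet>c kron_vec (u i) (w i)"
proof -
  have "(Kmat d n u w *\<^sub>v y) $ i = (\<Sum>p<d * d. Kmat d n u w $$ (i, p) * y $ p)"
    using y i by (simp add: Kmat_def scalar_prod_def atLeast0LessThan)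
  also have "\<dots> = (\<Sum>p<d * d. y $ p * cnj (kron_vec (u i) (w i) $ p))"
    using i by (simp add: index_Kmat[OF u w] mult.commute)
  also have "\<dots> = y \<bullet>c kron_vec (u i) (w i)"
    using u[OF i] w[OF i] by (simp add: scalar_prod_def atLeast0LessThan)
  finally show ?thesis .
qed

lemma Kmat_mult_kron_vec:
  assumes u: "\<And>i. i < n \<Longrightarrow> u i \<in> carrier_vec d" and w: "\<And>i. i < n \<Longrightarrow> w i \<in> carrier_vec d"
    and v: "v \<in> carrier_vec d" and x: "x \<in> carrier_vec d" and i: "i < n"
  shows "(Kmat d n u w *\<^sub>v kron_vec v x) $ i = (v \<bullet>c u i) * (x \<bullet>c w i)"
proof -
  have "(Kmat d n u w *\<^sub>v kron_vec v x) $ i = kron_vec v x \<bullet>c kron_vec (u i) (w i)"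
    by (rule Kmat_mult_vec[OF u w carrier_kron_vec[OF v x] i])
  also have "\<dots> = (v \<bullet>c u i) * (x \<bullet>c w i)"
    using u[OF i] w[OF i] v x by (simp add: kron_vec_cscalar_prod)
  finally show ?thesis .
qed

lemma index_Dmat_ketbra_sum:
  assumes u: "\<And>i. i < n \<Longrightarrow> u i \<in> carrier_vec d" and w: "\<And>i. i < n \<Longrightarrow> w i \<in> carrier_vec d"
    and v: "\<And>k. k < m \<Longrightarrow> v k \<in> carrier_vec d" and x: "\<And>k. k < m \<Longrightarrow> x k \<in> carrier_vec d"
    and i: "i < n" and j: "j < n"
  shows "Dmat n u w (ketbra_sum (d * d) m (\<lambda>k. kron_vec (v k) (x k))) $$ (i, j) =
    of_real (\<Sum>k<m. (cmod (v k \<bullet>c u i))\<^sup>2 * (cmod (x k \<bullet>c w j))\<^sup>2)"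
proof -
  have "Dmat n u w (ketbra_sum (d * d) m (\<lambda>k. kron_vec (v k) (x k))) $$ (i, j) =
      of_real (\<Sum>k<m. (cmod (kron_vec (v k) (x k) \<bullet>c kron_vec (u i) (w j)))\<^sup>2)"
    using i j u[OF i] w[OF j] v x
    by (simp add: Dmat_def expval_ketbra_sum carrier_kron_vec del: of_real_sum of_real_power)
  also have "\<dots> = of_real (\<Sum>k<m. (cmod (v k \<bullet>c u i))\<^sup>2 * (cmod (x k \<bullet>c w j))\<^sup>2)"
  proof (intro arg_cong[where f = of_real] sum.cong refl)
    fix k assume "k \<in> {..<m}"
    then have "kron_vec (v k) (x k) \<bullet>c kron_vec (u i) (w j) = (v k \<bullet>c u i) * (x k \<bullet>c w j)"
      using u[OF i] w[OF j] v[of k] x[of k] by (simp add: kron_vec_cscalar_prod)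
    then show "(cmod (kron_vec (v k) (x k) \<bullet>c kron_vec (u i) (w j)))\<^sup>2 =
        (cmod (v k \<bullet>c u i))\<^sup>2 * (cmod (x k \<bullet>c w j))\<^sup>2"
      by (simp add: norm_mult power_mult_distrib)
  qed
  finally show ?thesis .
qed

lemma FH_common_support_edge:
  assumes u: "\<And>i. i < n \<Longrightarrow> u i \<in> carrier_vec d" and w: "\<And>i. i < n \<Longrightarrow> w i \<in> carrier_vec d"
    and v: "\<And>k. k < m \<Longrightarrow> v k \<in> carrier_vec d" and x: "\<And>k. k < m \<Longrightarrow> x k \<in> carrier_vec d"
    and \<rho>: "\<rho> = ketbra_sum (d * d) m (\<lambda>k. kron_vec (v k) (x k))" and FH: "\<rho> \<in> FH d n u w H"
    and k: "k < m" and ij: "i < n" "j < n" "i \<noteq> j"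
    and support: "v k \<bullet>c u i \<noteq> 0" "x k \<bullet>c w i \<noteq> 0" "v k \<bullet>c u j \<noteq> 0" "x k \<bullet>c w j \<noteq> 0"
  shows "{i, j} \<in> H"
proof -
  have Dmat_nonzero: "Dmat n u w \<rho> $$ (i', j') \<noteq> 0"
    if "i' < n" "j' < n" "v k \<bullet>c u i' \<noteq> 0" "x k \<bullet>c w j' \<noteq> 0" for i' j'
  proof -
    have "0 < (\<Sum>k<m. (cmod (v k \<bullet>c u i'))\<^sup>2 * (cmod (x k \<bullet>c w j'))\<^sup>2)"
      using k that by (intro sum_pos2[of _ k]) auto
    then show ?thesis
      using that by (simp add: \<rho> index_Dmat_ketbra_sum[OF u w v x] del: of_real_sum)
  qed
  have "Dmat n u w \<rho> $$ (i, j) * Dmat n u w \<rho> $$ (j, i) \<noteq> 0"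
    using ij support by (simp add: Dmat_nonzero)
  then have "{i, j} \<in> graph_of n (Dmat n u w \<rho>)"
    unfolding graph_of_def using ij by blast
  then show ?thesis
    using FH by (auto simp: FH_def)
qed

theorem mainTheorem5:
  fixes d n :: nat and H :: "nat set set" and u w :: "nat \<Rightarrow> complex vec" and \<rho> :: "complex mat"
  assumes "simple_graph n H"
    and "orthonormal_family d n u"
    and "orthonormal_family d n w"
    and "\<rho> \<in> FH d n u w H"
    and "separable_state d \<rho>"
  shows "Kmat d n u w * \<rho> * adj (Kmat d n u w) \<in> R1 n (psd_graph_cone n H)"
proof -
  (* Of the hypotheses on u and w only their dimensions matter. *)
  have u: "\<And>i. i < n \<Longrightarrow> u i \<in> carrier_vec d" and w: "\<And>i. i < n \<Longrightarrow> w i \<in> carrier_vec d"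
    using assms(2,3) by (auto simp: orthonormal_family_def)
  obtain m v x where v: "\<And>k. k < m \<Longrightarrow> v k \<in> carrier_vec d" and x: "\<And>k. k < m \<Longrightarrow> x k \<in> carrier_vec d"
    and \<rho>: "\<rho> = ketbra_sum (d * d) m (\<lambda>k. kron_vec (v k) (x k))"
    using separable_state_ketbra_sum[OF assms(5)] by blast
  define a where "a k = Kmat d n u w *\<^sub>v kron_vec (v k) (x k)" for k
  have "\<forall>k<m. kron_vec (v k) (x k) \<in> carrier_vec (d * d)"
    using carrier_kron_vec[OF v x] by blast
  then have "Kmat d n u w * \<rho> * adj (Kmat d n u w) = ketbra_sum n m a"
    unfolding \<rho> a_def by (rule ketbra_sum_congruence[OF carrier_Kmat])
  moreover have "a k \<in> carrier_vec n \<and> ketbra (a k) (a k) \<in> psd_graph_cone n H" if k: "k < m" for k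
  proof -
    have "a k \<in> carrier_vec n"
      unfolding a_def using carrier_Kmat carrier_kron_vec[OF v[OF k] x[OF k]] by (rule mult_mat_vec_carrier)
    moreover have "{i, j} \<in> H" if "i < n" "j < n" "i \<noteq> j" "a k $ i \<noteq> 0" "a k $ j \<noteq> 0" for i j
      using that k unfolding a_def
      by (intro FH_common_support_edge[OF u w v x \<rho> assms(4)]) (auto simp: Kmat_mult_kron_vec[OF u w v x])
    ultimately show ?thesis
      by (simp add: ketbra_in_psd_graph_cone)
  qed
  ultimately show ?thesis
    by (simp add: ketbra_sum_in_R1)
qed

end
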